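(* Let $G$ be a finite simple graph with maximum degree $2$. If no connected component of $G$ is isomorphic to the cycle $C_4$ or to the cycle $C_7$, then $\chi'_{ss}(G)\le 3$.
   Context: All graphs are finite, simple and undirected. For $M\subseteq E(G)$, $G[V(M)]$ denotes the subgraph of $G$ induced by the set of endvertices of edges of $M$. A set $M\subseteq E(G)$ is a semistrong matching if every edge of $M$ is incident with a vertex that has degree $1$ in $G[V(M)]$. For a positive integer $k$, a semistrong $k$-edge-coloring of $G$ is an assignment of at most $k$ colors to the edges of $G$ in which every color class is a semistrong matching. The semistrong chromatic index $\chi'_{ss}(G)$ is the least $k$ such that $G$ has a semistrong $k$-edge-coloring. $C_n$ denotes the cycle on $n$ vertices. *)

theory Defs
  imports Main
begin

definition simple_graph :: "'a set \<Rightarrow> 'a set set \<Rightarrow> bool" where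
  "simple_graph V E \<longleftrightarrow> finite V \<and> (\<forall>e\<in>E. e \<subseteq> V \<and> card e = 2)"

definition degree :: "'a set set \<Rightarrow> 'a \<Rightarrow> nat" where
  "degree E v = card {e\<in>E. v \<in> e}"

definition max_degree :: "'a set \<Rightarrow> 'a set set \<Rightarrow> nat" where
  "max_degree V E = Max (degree E ` V)"

definition adj :: "'a set set \<Rightarrow> 'a \<Rightarrow> 'a \<Rightarrow> bool" where
  "adj E u v \<longleftrightarrow> {u, v} \<in> E"

definition component :: "'a set \<Rightarrow> 'a set set \<Rightarrow> 'a set \<Rightarrow> bool" where
  "component V E S \<longleftrightarrow> (\<exists>v\<in>V. S = {u. (adj E)\<^sup>*\<^sup>* v u})"

definition induced_iso_cycle :: "'a set set \<Rightarrow> 'a set \<Rightarrow> nat \<Rightarrow> bool" where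
  "induced_iso_cycle E S n \<longleftrightarrow> n \<ge> 3 \<and>
     (\<exists>f. bij_betw f {..<n} S \<and>
          {e\<in>E. e \<subseteq> S} = {{f i, f (Suc i mod n)} | i. i < n})"

definition semistrong_matching :: "'a set set \<Rightarrow> 'a set set \<Rightarrow> bool" where
  "semistrong_matching E M \<longleftrightarrow> M \<subseteq> E \<and>
     (\<forall>e\<in>M. \<exists>v\<in>e. degree {e'\<in>E. e' \<subseteq> \<Union>M} v = 1)"

definition semistrong_coloring :: "'a set set \<Rightarrow> nat \<Rightarrow> ('a set \<Rightarrow> nat) \<Rightarrow> bool" where
  "semistrong_coloring E k c \<longleftrightarrow> (\<forall>e\<in>E. c e < k) \<and>
     (\<forall>i<k. semistrong_matching E {e\<in>E. c e = i})"

definition semistrong_chromatic_index :: "'a set set \<Rightarrow> nat" where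
  "semistrong_chromatic_index E = (LEAST k. k > 0 \<and> (\<exists>c. semistrong_coloring E k c))"

end

theory Submission
  imports Defs
begin

(*
  A graph of maximum degree 2 is a disjoint union of paths and cycles; we color it by induction
  on the number of edges. A pendant edge uv (u a leaf) can be put back into a semistrong
  3-edge-coloring of the rest: apart from uv, at most two edges meet an edge at v, so some color
  is free there, and in that color class u has degree 1 while every other witness keeps its
  degree.
  Without pendant edges, the edge through any vertex lies on a cycle component, which is
  vertex-disjoint from the remaining edges, so colorings of both parts combine. The cycle C_n is
  colored by the word 012012..., and for n = 1 (mod 3) by 01201 followed by 012012... (this needs
  n >= 10, whence the exceptions 4 and 7). In both words every edge has a side on which the next
  two edges carry other colors; the endpoint on that side then has degree 1 in the subgraph
  induced by its color class.
*)

lemma unused_color: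
  fixes A :: "nat set"
  assumes "finite A" "card A < k"
  shows "\<exists>\<gamma><k. \<gamma> \<notin> A"
proof (rule ccontr)
  assume "\<not> ?thesis"
  then have "{..<k} \<subseteq> A" by auto
  then have "k \<le> card A" using card_mono[OF assms(1)] by (metis card_lessThan)
  then show False using assms(2) by simp
qed

lemma first_repetition:
  fixes x :: "nat \<Rightarrow> 'a"
  assumes "finite (range x)"
  obtains m j where "inj_on x {..<m}" "j < m" "x j = x m"
proof -
  let ?rep = "\<lambda>m. \<exists>j<m. x j = x m"
  have "\<not> inj x" using assms finite_imageD infinite_UNIV_nat by blast
  then obtain i k where "i < k" "x i = x k"
    unfolding inj_def by (metis linorder_neqE_nat)
  then have "?rep k" by blast
  define m where "m = (LEAST m. ?rep m)"
  have "?rep m" unfolding m_def using \<open>?rep k\<close> by (rule LeastI)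
  moreover have "inj_on x {..<m}"
  proof (rule inj_onI, rule ccontr)
    fix i k assume ik: "i \<in> {..<m}" "k \<in> {..<m}" "x i = x k" "i \<noteq> k"
    have "?rep (max i k)"
    proof (cases "i < k")
      case True
      then show ?thesis using ik(3) by (auto simp: max_def)
    next
      case False
      then have "k < i" using ik(4) by simp
      then show ?thesis using ik(3) by (auto simp: max_def)
    qed
    moreover have "max i k < m" using ik(1,2) by simp
    ultimately show False using not_less_Least unfolding m_def by blast
  qed
  ultimately show ?thesis using that by blast
qed

lemma card_2_edge_other:
  assumes "card e = 2" "v \<in> e"
  obtains w where "w \<noteq> v" "e = {v, w}"
  using assms by (metis card_2_iff insert_commute insertE singletonD)

lemma induced_degree_eq_1:
  assumes "e \<in> M" "M \<subseteq> E" "y \<in> e" "\<And>g. g \<in> E \<Longrightarrow> y \<in> g \<Longrightarrow> g \<subseteq> \<Union>M \<Longrightarrow> g = e"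
  shows "degree {g\<in>E. g \<subseteq> \<Union>M} y = 1"
proof -
  have "{g\<in>{g\<in>E. g \<subseteq> \<Union>M}. y \<in> g} = {e}" using assms by blast
  then show ?thesis unfolding degree_def by simp
qed

lemma degree_eq_1_unique:
  assumes "degree E u = 1" "e \<in> E" "u \<in> e" "g \<in> E" "u \<in> g"
  shows "g = e"
proof -
  obtain x where x: "{g\<in>E. u \<in> g} = {x}" using assms(1) unfolding degree_def by (rule card_1_singletonE)
  have "g \<in> {g\<in>E. u \<in> g}" "e \<in> {g\<in>E. u \<in> g}" using assms(2-5) by simp_all
  then show ?thesis unfolding x by simp
qed

lemma induced_degree_cong:
  assumes "{g\<in>E. y \<in> g \<and> g \<subseteq> U} = {g\<in>E'. y \<in> g \<and> g \<subseteq> U'}"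
  shows "degree {g\<in>E. g \<subseteq> U} y = degree {g\<in>E'. g \<subseteq> U'} y"
proof -
  have "{g\<in>{g\<in>E. g \<subseteq> U}. y \<in> g} = {g\<in>{g\<in>E'. g \<subseteq> U'}. y \<in> g}"
    using assms by blast
  then show ?thesis unfolding degree_def by simp
qed

lemma semistrong_matching_Un:
  assumes "semistrong_matching A MA" "semistrong_matching B MB" "\<Union>A \<inter> \<Union>B = {}"
  shows "semistrong_matching (A \<union> B) (MA \<union> MB)"
proof -
  have one_side: "\<exists>y\<in>e. degree {g\<in>A \<union> B. g \<subseteq> \<Union>(MA \<union> MB)} y = 1"
    if "semistrong_matching A MA" "MB \<subseteq> B" "\<Union>A \<inter> \<Union>B = {}" "e \<in> MA"
    for A B MA MB and e :: "'a set"
  proof -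
    from that(1,4) obtain y where y: "y \<in> e" "degree {g\<in>A. g \<subseteq> \<Union>MA} y = 1"
      unfolding semistrong_matching_def by blast
    have "MA \<subseteq> A" using that(1) unfolding semistrong_matching_def by blast
    then have yA: "y \<in> \<Union>A" using that(4) y(1) by blast
    have "{g\<in>A \<union> B. y \<in> g \<and> g \<subseteq> \<Union>(MA \<union> MB)} = {g\<in>A. y \<in> g \<and> g \<subseteq> \<Union>MA}"
    proof (intro equalityI subsetI)
      fix g assume g: "g \<in> {g\<in>A \<union> B. y \<in> g \<and> g \<subseteq> \<Union>(MA \<union> MB)}"
      then have "g \<in> A" using yA that(3) by blast
      moreover have "g \<inter> \<Union>MB = {}" using \<open>g \<in> A\<close> that(2,3) by blast
      ultimately show "g \<in> {g\<in>A. y \<in> g \<and> g \<subseteq> \<Union>MA}" using g by blast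
    qed auto
    then have "degree {g\<in>A \<union> B. g \<subseteq> \<Union>(MA \<union> MB)} y = degree {g\<in>A. g \<subseteq> \<Union>MA} y"
      by (rule induced_degree_cong)
    then show ?thesis using y by auto
  qed
  have "MA \<subseteq> A" "MB \<subseteq> B" using assms(1,2) unfolding semistrong_matching_def by blast+
  moreover have "\<exists>y\<in>e. degree {g\<in>A \<union> B. g \<subseteq> \<Union>(MA \<union> MB)} y = 1" if "e \<in> MA \<union> MB" for e
    using that
  proof
    assume "e \<in> MA"
    then show ?thesis using one_side[OF assms(1) \<open>MB \<subseteq> B\<close> assms(3)] by blast
  next
    assume "e \<in> MB"
    moreover have "\<Union>B \<inter> \<Union>A = {}" using assms(3) by blast
    ultimately have "\<exists>y\<in>e. degree {g\<in>B \<union> A. g \<subseteq> \<Union>(MB \<union> MA)} y = 1"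
      using one_side[OF assms(2) \<open>MA \<subseteq> A\<close>] by blast
    then show ?thesis by (simp only: Un_commute)
  qed
  ultimately show ?thesis unfolding semistrong_matching_def by blast
qed

lemma semistrong_coloring_Un:
  assumes "semistrong_coloring A k cA" "semistrong_coloring B k cB"
    and "\<Union>A \<inter> \<Union>B = {}" "A \<inter> B = {}"
  shows "semistrong_coloring (A \<union> B) k (\<lambda>e. if e \<in> A then cA e else cB e)"
proof -
  have "{e\<in>A \<union> B. (if e \<in> A then cA e else cB e) = i} = {e\<in>A. cA e = i} \<union> {e\<in>B. cB e = i}"
    for i using assms(4) by auto
  then show ?thesis
    using assms(1,2) semistrong_matching_Un[OF _ _ assms(3)]
    unfolding semistrong_coloring_def by auto
qed

lemma semistrong_matching_supergraph:
  assumes "semistrong_matching E' M" "E' \<subseteq> E" "\<And>g. g \<in> E - E' \<Longrightarrow> \<not> g \<subseteq> \<Union>M"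
  shows "semistrong_matching E M"
proof -
  have "{g\<in>E. g \<subseteq> \<Union>M} = {g\<in>E'. g \<subseteq> \<Union>M}" using assms(2,3) by blast
  then show ?thesis using assms(1,2) unfolding semistrong_matching_def by auto
qed

lemma semistrong_matching_insert_pendant:
  assumes e: "e = {u, v}" "e \<in> E" and pendant: "\<And>g. g \<in> E \<Longrightarrow> u \<in> g \<Longrightarrow> g = e"
    and M: "semistrong_matching (E - {e}) M"
    and far: "\<And>g h. g \<in> M \<Longrightarrow> h \<in> E - {e} \<Longrightarrow> v \<in> h \<Longrightarrow> g \<inter> h = {}"
  shows "semistrong_matching E (insert e M)"
proof -
  have M_sub: "M \<subseteq> E - {e}" using M unfolding semistrong_matching_def by blast
  have "insert e M \<subseteq> E" using e(2) M_sub by blast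
  then have "degree {x\<in>E. x \<subseteq> \<Union>(insert e M)} u = 1"
    using pendant e(1) by (intro induced_degree_eq_1[of e]) blast+
  then have at_e: "\<exists>y\<in>e. degree {x\<in>E. x \<subseteq> \<Union>(insert e M)} y = 1" using e(1) by blast
  have at_M: "\<exists>y\<in>g. degree {x\<in>E. x \<subseteq> \<Union>(insert e M)} y = 1" if g: "g \<in> M" for g
  proof -
    obtain y where y: "y \<in> g" "degree {x\<in>E - {e}. x \<subseteq> \<Union>M} y = 1"
      using M g unfolding semistrong_matching_def by blast
    have "g \<in> E - {e}" using g M_sub by blast
    then have "u \<notin> g" "v \<notin> g" using pendant far[OF g] by blast+
    then have "y \<notin> e" using e(1) y(1) by blast
    have "{x\<in>E. y \<in> x \<and> x \<subseteq> \<Union>(insert e M)} = {x\<in>E - {e}. y \<in> x \<and> x \<subseteq> \<Union>M}"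
    proof (intro equalityI subsetI)
      fix x assume x: "x \<in> {x\<in>E. y \<in> x \<and> x \<subseteq> \<Union>(insert e M)}"
      then have "x \<in> E - {e}" using \<open>y \<notin> e\<close> by blast
      moreover have "u \<notin> x" using pendant x \<open>x \<in> E - {e}\<close> by blast
      moreover have "v \<notin> x" using far[OF g \<open>x \<in> E - {e}\<close>] x y(1) by blast
      ultimately show "x \<in> {x\<in>E - {e}. y \<in> x \<and> x \<subseteq> \<Union>M}" using x e(1) by blast
    qed blast
    then have "degree {x\<in>E. x \<subseteq> \<Union>(insert e M)} y = degree {x\<in>E - {e}. x \<subseteq> \<Union>M} y"
      by (rule induced_degree_cong)
    then show ?thesis using y by auto
  qed
  show ?thesis unfolding semistrong_matching_def using e(2) M_sub at_e at_M by blast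
qed

definition cyc_next :: "nat \<Rightarrow> nat \<Rightarrow> nat" where
  "cyc_next n i = Suc i mod n"

definition cyc_prev :: "nat \<Rightarrow> nat \<Rightarrow> nat" where
  "cyc_prev n i = (if i = 0 then n - 1 else i - 1)"

lemma cyc_next_eq: "i < n \<Longrightarrow> cyc_next n i = (if Suc i < n then Suc i else 0)"
  by (cases "Suc i = n") (auto simp: cyc_next_def)

lemma cyc_next_less: "0 < n \<Longrightarrow> cyc_next n i < n"
  by (simp add: cyc_next_def)

lemma cyc_prev_less: "i < n \<Longrightarrow> cyc_prev n i < n"
  by (auto simp: cyc_prev_def)

lemma cyc_prev_next [simp]: "i < n \<Longrightarrow> cyc_prev n (cyc_next n i) = i"
  by (cases "Suc i < n") (auto simp: cyc_next_eq cyc_prev_def)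

lemma cyc_next_prev [simp]: "i < n \<Longrightarrow> cyc_next n (cyc_prev n i) = i"
  by (cases "i = 0") (auto simp: cyc_next_eq cyc_prev_def)

lemma cyc_next_neq_prev: "3 \<le> n \<Longrightarrow> i < n \<Longrightarrow> cyc_next n i \<noteq> cyc_prev n i"
  by (cases "Suc i < n"; cases "i = 0") (auto simp: cyc_next_eq cyc_prev_def)

definition cycle_word :: "nat \<Rightarrow> nat \<Rightarrow> nat" where
  "cycle_word n i = (if n mod 3 = 1 \<and> 5 \<le> i then i - 5 else i) mod 3"

lemma mod_3_neq_pred:
  fixes k :: nat
  assumes "2 \<le> k"
  shows "(k - 1) mod 3 \<noteq> k mod 3 \<and> (k - 2) mod 3 \<noteq> k mod 3"
proof -
  obtain b where "k = Suc (Suc b)" using assms by (metis add_2_eq_Suc le_Suc_ex)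
  then show ?thesis by (simp add: mod_Suc)
qed

lemma cycle_word_left:
  assumes "2 \<le> i" "\<not> (n mod 3 = 1 \<and> (i = 5 \<or> i = 6))"
  shows "cycle_word n (i - 1) \<noteq> cycle_word n i \<and> cycle_word n (i - 2) \<noteq> cycle_word n i"
proof (cases "n mod 3 = 1 \<and> 7 \<le> i")
  case True
  then have "cycle_word n j = (j - 5) mod 3" if "j \<in> {i, i - 1, i - 2}" for j
    using that by (auto simp: cycle_word_def)
  moreover have "i - 1 - 5 = i - 5 - 1" "i - 2 - 5 = i - 5 - 2" by arith+
  moreover have "2 \<le> i - 5" using True by arith
  ultimately show ?thesis using mod_3_neq_pred[of "i - 5"] by simp
next
  case False
  then have "cycle_word n j = j mod 3" if "j \<in> {i, i - 1, i - 2}" for j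
    using that assms by (auto simp: cycle_word_def)
  then show ?thesis using mod_3_neq_pred[OF assms(1)] by simp
qed

definition semistrong_cycle_pattern :: "nat \<Rightarrow> (nat \<Rightarrow> nat) \<Rightarrow> bool" where
  "semistrong_cycle_pattern n w \<longleftrightarrow> (\<forall>i<n.
     (w (cyc_prev n i) \<noteq> w i \<and> w (cyc_prev n (cyc_prev n i)) \<noteq> w i) \<or>
     (w (cyc_next n i) \<noteq> w i \<and> w (cyc_next n (cyc_next n i)) \<noteq> w i))"

lemma semistrong_cycle_pattern_cycle_word:
  assumes "3 \<le> n" "n \<noteq> 4" "n \<noteq> 7"
  shows "semistrong_cycle_pattern n (cycle_word n)"
  unfolding semistrong_cycle_pattern_def
proof (intro allI impI)
  fix i assume "i < n"
  consider "i = 0" | "i = 1" | "n mod 3 = 1 \<and> (i = 5 \<or> i = 6)"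
    | "2 \<le> i \<and> \<not> (n mod 3 = 1 \<and> (i = 5 \<or> i = 6))"
    by linarith
  then show "(cycle_word n (cyc_prev n i) \<noteq> cycle_word n i \<and>
      cycle_word n (cyc_prev n (cyc_prev n i)) \<noteq> cycle_word n i) \<or>
    (cycle_word n (cyc_next n i) \<noteq> cycle_word n i \<and>
      cycle_word n (cyc_next n (cyc_next n i)) \<noteq> cycle_word n i)"
  proof cases
    case 1
    have "cyc_next n 0 = 1" "cyc_next n 1 = 2" using assms by (simp_all add: cyc_next_def)
    then show ?thesis using 1 by (simp add: cycle_word_def)
  next
    case 2
    have "cyc_next n 1 = 2" "cyc_next n 2 = (if n = 3 then 0 else 3)"
      using assms by (simp_all add: cyc_next_def)
    then show ?thesis using 2 by (simp add: cycle_word_def)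
  next
    case 3
    with assms have "10 \<le> n" by presburger
    then have "cyc_next n 5 = 6" "cyc_next n 6 = 7" "cyc_next n 7 = 8" "cyc_next n 8 = 9"
      by (simp_all add: cyc_next_def)
    then show ?thesis using 3 by (auto simp: cycle_word_def)
  next
    case 4
    then have "cyc_prev n i = i - 1" "cyc_prev n (i - 1) = i - 2" by (auto simp: cyc_prev_def)
    then show ?thesis using cycle_word_left 4 by metis
  qed
qed

definition cycle_edge :: "(nat \<Rightarrow> 'a) \<Rightarrow> nat \<Rightarrow> nat \<Rightarrow> 'a set" where
  "cycle_edge f n i = {f i, f (cyc_next n i)}"

definition cycle_edges :: "(nat \<Rightarrow> 'a) \<Rightarrow> nat \<Rightarrow> 'a set set" where
  "cycle_edges f n = cycle_edge f n ` {..<n}"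

lemma cycle_edges_conv: "{{f i, f (Suc i mod n)} | i. i < n} = cycle_edges f n"
  by (auto simp: cycle_edges_def cycle_edge_def cyc_next_def)

lemma cycle_edges_subset:
  assumes "e \<in> cycle_edges f n"
  shows "e \<subseteq> f ` {..<n}"
proof -
  obtain i where "i < n" "e = cycle_edge f n i" using assms unfolding cycle_edges_def by blast
  then show ?thesis using cyc_next_less[of n i] by (auto simp: cycle_edge_def)
qed

lemma mem_cycle_edge:
  assumes "inj_on f {..<n}" "i < n" "j < n"
  shows "f j \<in> cycle_edge f n i \<longleftrightarrow> i = j \<or> i = cyc_prev n j"
proof -
  have "f j = f i \<longleftrightarrow> j = i" "f j = f (cyc_next n i) \<longleftrightarrow> j = cyc_next n i"
    using assms cyc_next_less[of n i] by (auto simp: inj_on_def)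
  moreover have "j = cyc_next n i \<longleftrightarrow> i = cyc_prev n j"
    using assms(2,3) cyc_prev_next cyc_next_prev by metis
  ultimately show ?thesis by (auto simp: cycle_edge_def)
qed

lemma cycle_edge_inj:
  assumes "inj_on f {..<n}" "3 \<le> n" "i < n" "j < n" "cycle_edge f n i = cycle_edge f n j"
  shows "i = j"
proof (rule ccontr)
  assume "i \<noteq> j"
  have "f i \<in> cycle_edge f n j" "f (cyc_next n i) \<in> cycle_edge f n j"
    using assms(5) by (auto simp: cycle_edge_def)
  then have "j = cyc_prev n i" "j = cyc_next n i \<or> j = i"
    using \<open>i \<noteq> j\<close> mem_cycle_edge[OF assms(1,4)] assms(3) cyc_next_less[of n i] by auto
  then show False
    using \<open>i \<noteq> j\<close> cyc_next_neq_prev[OF assms(2,3)] by auto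
qed

lemma vertex_in_cycle_class:
  assumes "inj_on f {..<n}" "j < n"
  shows "f j \<in> \<Union>(cycle_edge f n ` {i. i < n \<and> w i = \<gamma>}) \<longleftrightarrow>
    w j = \<gamma> \<or> w (cyc_prev n j) = \<gamma>"
proof -
  have "f j \<in> \<Union>(cycle_edge f n ` {i. i < n \<and> w i = \<gamma>}) \<longleftrightarrow>
      (\<exists>i<n. w i = \<gamma> \<and> (i = j \<or> i = cyc_prev n j))"
    using mem_cycle_edge[OF assms(1) _ assms(2)] by blast
  also have "\<dots> \<longleftrightarrow> w j = \<gamma> \<or> w (cyc_prev n j) = \<gamma>"
    using assms(2) cyc_prev_less[OF assms(2)] by auto
  finally show ?thesis .
qed

lemma degree_cycle_vertex_eq_1:
  assumes inj: "inj_on f {..<n}" and j: "j < n" and M: "M \<subseteq> cycle_edges f n" "e \<in> M"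
    and at_j: "{cycle_edge f n j, cycle_edge f n (cyc_prev n j)} = {e, e'}" and "\<not> e' \<subseteq> \<Union>M"
  shows "degree {g\<in>cycle_edges f n. g \<subseteq> \<Union>M} (f j) = 1"
proof (rule induced_degree_eq_1[OF M(2,1)])
  show "f j \<in> e" using at_j j by (auto simp: cycle_edge_def doubleton_eq_iff)
  fix g assume g: "g \<in> cycle_edges f n" "f j \<in> g" "g \<subseteq> \<Union>M"
  then obtain k where "k < n" "g = cycle_edge f n k" unfolding cycle_edges_def by blast
  then have "g \<in> {e, e'}" using g(2) mem_cycle_edge[OF inj _ j] at_j by auto
  then show "g = e" using g(3) \<open>\<not> e' \<subseteq> \<Union>M\<close> by blast
qed

lemma semistrong_matching_cycle_class:
  assumes inj: "inj_on f {..<n}" and pattern: "semistrong_cycle_pattern n w"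
  shows "semistrong_matching (cycle_edges f n) (cycle_edge f n ` {i. i < n \<and> w i = \<gamma>})"
    (is "semistrong_matching ?C ?M")
  unfolding semistrong_matching_def
proof (intro conjI ballI)
  show M: "?M \<subseteq> ?C" by (auto simp: cycle_edges_def)
  fix e assume "e \<in> ?M"
  then obtain i where i: "i < n" "w i = \<gamma>" "e = cycle_edge f n i" by blast
  have uncovered: "\<not> cycle_edge f n k \<subseteq> \<Union>?M"
    if "f j \<in> cycle_edge f n k" "j < n" "w j \<noteq> \<gamma>" "w (cyc_prev n j) \<noteq> \<gamma>" for j k
    using that vertex_in_cycle_class[OF inj \<open>j < n\<close>, of w \<gamma>] by blast
  have next_i: "cyc_next n i < n" using cyc_next_less i(1) by simp
  from pattern i(1) consider
      "w (cyc_prev n i) \<noteq> \<gamma>" "w (cyc_prev n (cyc_prev n i)) \<noteq> \<gamma>"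
    | "w (cyc_next n i) \<noteq> \<gamma>" "w (cyc_next n (cyc_next n i)) \<noteq> \<gamma>"
    unfolding semistrong_cycle_pattern_def i(2)[symmetric] by blast
  then show "\<exists>v\<in>e. degree {g\<in>?C. g \<subseteq> \<Union>?M} v = 1"
  proof cases
    case 1
    then have "\<not> cycle_edge f n (cyc_prev n i) \<subseteq> \<Union>?M"
      by (intro uncovered[OF _ cyc_prev_less[OF i(1)]]) (simp_all add: cycle_edge_def)
    then have "degree {g\<in>?C. g \<subseteq> \<Union>?M} (f i) = 1"
      using i by (intro degree_cycle_vertex_eq_1[OF inj i(1) M \<open>e \<in> ?M\<close>]) auto
    then show ?thesis using i(3) by (auto simp: cycle_edge_def)
  next
    case 2
    then have "\<not> cycle_edge f n (cyc_next n i) \<subseteq> \<Union>?M"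
      using next_i
      by (intro uncovered[of "cyc_next n (cyc_next n i)"]) (simp_all add: cycle_edge_def cyc_next_less)
    then have "degree {g\<in>?C. g \<subseteq> \<Union>?M} (f (cyc_next n i)) = 1"
      using i by (intro degree_cycle_vertex_eq_1[OF inj next_i M \<open>e \<in> ?M\<close>]) auto
    then show ?thesis using i(3) by (auto simp: cycle_edge_def)
  qed
qed

lemma semistrong_coloring_cycle:
  assumes inj: "inj_on f {..<n}" and n: "3 \<le> n" and pattern: "semistrong_cycle_pattern n w"
    and bounded: "\<And>i. i < n \<Longrightarrow> w i < k"
  shows "\<exists>c. semistrong_coloring (cycle_edges f n) k c"
proof -
  define c where "c e = w (THE i. i < n \<and> cycle_edge f n i = e)" for e
  have c_edge: "c (cycle_edge f n i) = w i" if "i < n" for i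
    unfolding c_def using that cycle_edge_inj[OF inj n] by (metis (mono_tags, lifting) the_equality)
  have "{e \<in> cycle_edges f n. c e = \<gamma>} = cycle_edge f n ` {i. i < n \<and> w i = \<gamma>}" for \<gamma>
    using c_edge by (auto simp: cycle_edges_def)
  then have "semistrong_coloring (cycle_edges f n) k c"
    unfolding semistrong_coloring_def
    using semistrong_matching_cycle_class[OF inj pattern] c_edge bounded
    by (auto simp: cycle_edges_def)
  then show ?thesis by blast
qed

definition edge_closed :: "'a set set \<Rightarrow> 'a set \<Rightarrow> bool" where
  "edge_closed E S \<longleftrightarrow> (\<forall>e\<in>E. e \<inter> S \<noteq> {} \<longrightarrow> e \<subseteq> S)"

definition cycle_component :: "'a set set \<Rightarrow> 'a set \<Rightarrow> nat \<Rightarrow> bool" where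
  "cycle_component E S n \<longleftrightarrow> edge_closed E S \<and> induced_iso_cycle E S n"

lemma edge_closedD: "edge_closed E S \<Longrightarrow> e \<in> E \<Longrightarrow> e \<inter> S \<noteq> {} \<Longrightarrow> e \<subseteq> S"
  unfolding edge_closed_def by blast

lemma edge_closed_reachable:
  assumes "edge_closed E S" "v \<in> S" "(adj E)\<^sup>*\<^sup>* v u"
  shows "u \<in> S"
  using assms(3)
proof (induction rule: rtranclp_induct)
  case base
  show ?case using assms(2) .
next
  case (step y z)
  have "{y, z} \<in> E" using step.hyps(2) unfolding adj_def .
  moreover have "{y, z} \<inter> S \<noteq> {}" using step.IH by blast
  ultimately have "{y, z} \<subseteq> S" by (rule edge_closedD[OF assms(1)])
  then show ?case by simp
qed

lemma cycle_component_is_component: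
  assumes edges: "\<forall>e\<in>E. e \<subseteq> V" and "cycle_component E S n"
  shows "component V E S"
proof -
  obtain f where n: "3 \<le> n" and bij: "bij_betw f {..<n} S"
    and cycle: "{e\<in>E. e \<subseteq> S} = cycle_edges f n" and closed: "edge_closed E S"
    using assms(2) unfolding cycle_component_def induced_iso_cycle_def cycle_edges_conv by blast
  have S: "S = f ` {..<n}" using bij by (simp add: bij_betw_def)
  have edge: "adj E (f i) (f (Suc i))" if "Suc i < n" for i
  proof -
    have "cycle_edge f n i \<in> E" using cycle that by (auto simp: cycle_edges_def)
    then show ?thesis using that by (simp add: adj_def cycle_edge_def cyc_next_eq)
  qed
  have reach: "(adj E)\<^sup>*\<^sup>* (f 0) (f i)" if "i < n" for i
    using that
  proof (induction i)
    case (Suc i)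
    then have "(adj E)\<^sup>*\<^sup>* (f 0) (f i)" by simp
    from this edge[OF Suc.prems] show ?case by (rule rtranclp.rtrancl_into_rtrancl)
  qed simp
  have "S = {u. (adj E)\<^sup>*\<^sup>* (f 0) u}"
  proof (intro equalityI subsetI)
    fix u assume "u \<in> S"
    then obtain i where "i < n" "u = f i" unfolding S by blast
    then show "u \<in> {u. (adj E)\<^sup>*\<^sup>* (f 0) u}" using reach by simp
  next
    fix u assume "u \<in> {u. (adj E)\<^sup>*\<^sup>* (f 0) u}"
    moreover have "f 0 \<in> S" using n unfolding S by simp
    ultimately show "u \<in> S" using edge_closed_reachable[OF closed] by blast
  qed
  moreover have "f 0 \<in> V"
  proof -
    have "{f 0, f (Suc 0)} \<in> E" using edge[of 0] n unfolding adj_def by simp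
    then show ?thesis using edges by blast
  qed
  ultimately show ?thesis unfolding component_def by blast
qed

locale max_degree_2_graph =
  fixes E :: "'a set set"
  assumes finite_edges: "finite E"
    and card_edge: "e \<in> E \<Longrightarrow> card e = 2"
    and degree_le_2: "degree E v \<le> 2"
begin

lemma subgraph: "E' \<subseteq> E \<Longrightarrow> max_degree_2_graph E'"
proof unfold_locales
  fix v assume "E' \<subseteq> E"
  then have "degree E' v \<le> degree E v"
    unfolding degree_def using finite_edges by (intro card_mono) auto
  then show "degree E' v \<le> 2" using degree_le_2 le_trans by blast
qed (use finite_edges card_edge finite_subset in blast)+

lemma incident_edge_cases:
  assumes "e1 \<in> E" "e2 \<in> E" "e3 \<in> E" "v \<in> e1" "v \<in> e2" "v \<in> e3" "e1 \<noteq> e2"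
  shows "e3 = e1 \<or> e3 = e2"
proof (rule ccontr)
  assume "\<not> ?thesis"
  then have "card {e1, e2, e3} = 3" using assms(7) by (auto simp: card_insert_if)
  moreover have "card {e1, e2, e3} \<le> degree E v"
    unfolding degree_def using assms finite_edges by (intro card_mono) auto
  ultimately show False using degree_le_2[of v] by simp
qed

lemma edge_ends_neq: "{a, b} \<in> E \<Longrightarrow> a \<noteq> b"
  using card_edge by fastforce

lemma neighbour_cases:
  assumes "{v, a} \<in> E" "{v, b} \<in> E" "{v, c} \<in> E" "a \<noteq> b"
  shows "c = a \<or> c = b"
proof -
  have "{v, c} = {v, a} \<or> {v, c} = {v, b}"
    using incident_edge_cases[OF assms(1-3)] assms(4) by (auto simp: doubleton_eq_iff)
  moreover have "v \<noteq> c" using assms(3) by (rule edge_ends_neq)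
  ultimately show ?thesis by (auto simp: doubleton_eq_iff)
qed

lemma card_edges_meeting_le_3:
  assumes "h \<in> E"
  shows "card {g\<in>E. g \<inter> h \<noteq> {}} \<le> 3"
proof -
  obtain v w where vw: "h = {v, w}" "v \<noteq> w"
    using card_edge[OF assms] by (meson card_2_iff)
  have split: "{g\<in>E. g \<inter> h \<noteq> {}} = {g\<in>E. v \<in> g} \<union> {g\<in>E. w \<in> g}" using vw by auto
  have "0 < card ({g\<in>E. v \<in> g} \<inter> {g\<in>E. w \<in> g})"
  proof -
    have "h \<in> {g\<in>E. v \<in> g} \<inter> {g\<in>E. w \<in> g}" using assms vw by simp
    moreover have "finite ({g\<in>E. v \<in> g} \<inter> {g\<in>E. w \<in> g})" using finite_edges by simp
    ultimately show ?thesis using card_gt_0_iff by blast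
  qed
  moreover have "card ({g\<in>E. v \<in> g} \<union> {g\<in>E. w \<in> g}) + card ({g\<in>E. v \<in> g} \<inter> {g\<in>E. w \<in> g})
      = degree E v + degree E w"
    unfolding degree_def using finite_edges card_Un_Int[of "{g\<in>E. v \<in> g}" "{g\<in>E. w \<in> g}"]
    by simp
  ultimately show ?thesis unfolding split using degree_le_2[of v] degree_le_2[of w] by linarith
qed

lemma cycle_edges_closed:
  assumes inj: "inj_on f {..<n}" and n: "3 \<le> n" and cycle: "cycle_edges f n \<subseteq> E"
    and "e \<in> E" "e \<inter> f ` {..<n} \<noteq> {}"
  shows "e \<in> cycle_edges f n"
proof -
  obtain i where i: "i < n" "f i \<in> e" using assms(5) by blast
  have "cycle_edge f n i \<noteq> cycle_edge f n (cyc_prev n i)"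
    using cycle_edge_inj[OF inj n i(1) cyc_prev_less[OF i(1)]] cyc_next_neq_prev[OF n i(1)]
      cyc_next_prev[OF i(1)] by metis
  moreover have "f i \<in> cycle_edge f n i" "f i \<in> cycle_edge f n (cyc_prev n i)"
    using i(1) by (simp_all add: cycle_edge_def)
  moreover have "cycle_edge f n i \<in> E" "cycle_edge f n (cyc_prev n i) \<in> E"
    using cycle i(1) cyc_prev_less[OF i(1)] by (auto simp: cycle_edges_def)
  ultimately have "e = cycle_edge f n i \<or> e = cycle_edge f n (cyc_prev n i)"
    using incident_edge_cases assms(4) i(2) by blast
  then show ?thesis
    using i(1) cyc_prev_less[OF i(1)] by (auto simp: cycle_edges_def)
qed

lemma cycle_component_of_cycle:
  assumes inj: "inj_on f {..<n}" and n: "3 \<le> n" and cycle: "cycle_edges f n \<subseteq> E"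
  shows "cycle_component E (f ` {..<n}) n"
proof -
  have closed: "e \<subseteq> f ` {..<n}" if "e \<in> E" "e \<inter> f ` {..<n} \<noteq> {}" for e
    using cycle_edges_closed[OF inj n cycle that] by (rule cycle_edges_subset)
  have "{e\<in>E. e \<subseteq> f ` {..<n}} = cycle_edges f n"
  proof (intro equalityI subsetI)
    fix e assume e: "e \<in> {e\<in>E. e \<subseteq> f ` {..<n}}"
    then have "e \<noteq> {}" using card_edge by force
    with e show "e \<in> cycle_edges f n" using cycle_edges_closed[OF inj n cycle] by blast
  next
    fix e assume "e \<in> cycle_edges f n"
    then show "e \<in> {e\<in>E. e \<subseteq> f ` {..<n}}"
      using cycle cycle_edges_subset by blast
  qed
  moreover have "bij_betw f {..<n} (f ` {..<n})" using inj by (rule inj_on_imp_bij_betw)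
  ultimately show ?thesis
    unfolding cycle_component_def edge_closed_def induced_iso_cycle_def cycle_edges_conv
    using n closed by blast
qed

lemma cycle_component_subgraph:
  assumes "E' \<subseteq> E" "cycle_component E' S n"
  shows "cycle_component E S n"
proof -
  obtain f where n: "3 \<le> n" and bij: "bij_betw f {..<n} S"
    and cycle: "{e\<in>E'. e \<subseteq> S} = cycle_edges f n"
    using assms(2) unfolding cycle_component_def induced_iso_cycle_def cycle_edges_conv by blast
  have "cycle_edges f n \<subseteq> E" using cycle assms(1) by blast
  moreover have "inj_on f {..<n}" "S = f ` {..<n}" using bij by (auto simp: bij_betw_def)
  ultimately show ?thesis using cycle_component_of_cycle n by blast
qed

lemma cycle_edges_disjoint:
  assumes inj: "inj_on f {..<n}" and n: "3 \<le> n" and cycle: "cycle_edges f n \<subseteq> E"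
  shows "\<Union>(cycle_edges f n) \<inter> \<Union>(E - cycle_edges f n) = {}"
proof (rule equals0I)
  fix y assume "y \<in> \<Union>(cycle_edges f n) \<inter> \<Union>(E - cycle_edges f n)"
  then obtain g h where y: "y \<in> g" "g \<in> cycle_edges f n" "y \<in> h" "h \<in> E" "h \<notin> cycle_edges f n"
    by blast
  have "y \<in> h \<inter> f ` {..<n}" using y(1,3) cycle_edges_subset[OF y(2)] by blast
  then have "h \<in> cycle_edges f n" using cycle_edges_closed[OF inj n cycle y(4)] by blast
  then show False using y(5) by contradiction
qed

lemma semistrong_coloring_extend_cycle:
  assumes inj: "inj_on f {..<n}" and n: "3 \<le> n" "n \<noteq> 4" "n \<noteq> 7" and cycle: "cycle_edges f n \<subseteq> E"
    and c': "semistrong_coloring (E - cycle_edges f n) 3 c'"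
  shows "\<exists>c. semistrong_coloring E 3 c"
proof -
  have "semistrong_cycle_pattern n (cycle_word n)"
    using semistrong_cycle_pattern_cycle_word n by blast
  moreover have "cycle_word n i < 3" for i by (simp add: cycle_word_def)
  ultimately obtain c where c: "semistrong_coloring (cycle_edges f n) 3 c"
    using semistrong_coloring_cycle[OF inj n(1)] by blast
  have "cycle_edges f n \<union> (E - cycle_edges f n) = E" using cycle by blast
  then show ?thesis
    using semistrong_coloring_Un[OF c c' cycle_edges_disjoint[OF inj n(1) cycle]] by auto
qed

lemma card_edges_near_le_2:
  assumes "e \<in> E" "v \<in> e"
  shows "card {g\<in>E - {e}. \<exists>h\<in>E - {e}. v \<in> h \<and> g \<inter> h \<noteq> {}} \<le> 2"
proof (cases "\<exists>h\<in>E - {e}. v \<in> h")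
  case True
  then obtain h where h: "h \<in> E - {e}" "v \<in> h" by blast
  then have "h' = h" if "h' \<in> E - {e}" "v \<in> h'" for h'
    using incident_edge_cases[of e h h' v] assms that by blast
  then have "{g\<in>E - {e}. \<exists>h\<in>E - {e}. v \<in> h \<and> g \<inter> h \<noteq> {}} = {g\<in>E. g \<inter> h \<noteq> {}} - {e}"
    using h by blast
  moreover have "e \<in> {g\<in>E. g \<inter> h \<noteq> {}}" using assms h by blast
  moreover have "card {g\<in>E. g \<inter> h \<noteq> {}} \<le> 3" using h by (intro card_edges_meeting_le_3) blast
  ultimately show ?thesis using finite_edges by (simp add: card_Diff_singleton)
qed simp

lemma unused_color_near:
  fixes c :: "'a set \<Rightarrow> nat"
  assumes "e \<in> E" "v \<in> e"
  obtains \<gamma> where "\<gamma> < 3"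
    "\<And>g h. g \<in> E - {e} \<Longrightarrow> h \<in> E - {e} \<Longrightarrow> v \<in> h \<Longrightarrow> g \<inter> h \<noteq> {} \<Longrightarrow> c g \<noteq> \<gamma>"
proof -
  define B where "B = {g\<in>E - {e}. \<exists>h\<in>E - {e}. v \<in> h \<and> g \<inter> h \<noteq> {}}"
  have "finite B" using finite_edges unfolding B_def by simp
  have "card B \<le> 2" unfolding B_def using assms by (rule card_edges_near_le_2)
  then have "card (c ` B) < 3" using card_image_le[OF \<open>finite B\<close>, of c] by linarith
  then obtain \<gamma> where "\<gamma> < 3" "\<gamma> \<notin> c ` B"
    using unused_color[OF finite_imageI[OF \<open>finite B\<close>]] by blast
  show ?thesis
  proof (rule that[OF \<open>\<gamma> < 3\<close>])
    fix g h assume "g \<in> E - {e}" "h \<in> E - {e}" "v \<in> h" "g \<inter> h \<noteq> {}"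
    then have "c g \<in> c ` B" unfolding B_def by blast
    then show "c g \<noteq> \<gamma>" using \<open>\<gamma> \<notin> c ` B\<close> by auto
  qed
qed

lemma semistrong_coloring_extend_pendant:
  assumes e: "e = {u, v}" "e \<in> E" and leaf: "degree E u = 1"
    and c': "semistrong_coloring (E - {e}) 3 c'"
  shows "\<exists>c. semistrong_coloring E 3 c"
proof -
  have pendant: "g = e" if "g \<in> E" "u \<in> g" for g
    using degree_eq_1_unique[OF leaf e(2) _ that] e(1) by blast
  obtain \<gamma> where \<gamma>: "\<gamma> < 3"
    and far: "\<And>g h. g \<in> E - {e} \<Longrightarrow> h \<in> E - {e} \<Longrightarrow> v \<in> h \<Longrightarrow> g \<inter> h \<noteq> {} \<Longrightarrow> c' g \<noteq> \<gamma>"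
    using unused_color_near[OF e(2)] e(1) by blast
  define c where "c = c'(e := \<gamma>)"
  have "semistrong_matching E {g\<in>E. c g = i}" if "i < 3" for i
  proof -
    have color_class: "semistrong_matching (E - {e}) {g\<in>E - {e}. c' g = i}"
      using c' \<open>i < 3\<close> unfolding semistrong_coloring_def by blast
    show ?thesis
    proof (cases "i = \<gamma>")
      case True
      have "{g\<in>E. c g = i} = insert e {g\<in>E - {e}. c' g = i}"
        using True e(2) unfolding c_def by auto
      moreover have "g \<inter> h = {}" if "g \<in> {g\<in>E - {e}. c' g = i}" "h \<in> E - {e}" "v \<in> h" for g h
      proof (rule ccontr)
        assume "g \<inter> h \<noteq> {}"
        moreover have "g \<in> E - {e}" using that(1) by simp
        ultimately have "c' g \<noteq> \<gamma>" using far that(2,3) by blast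
        then show False using that(1) True by simp
      qed
      ultimately show ?thesis using semistrong_matching_insert_pendant[OF e pendant color_class]
        by (simp only:)
    next
      case False
      have "{g\<in>E. c g = i} = {g\<in>E - {e}. c' g = i}"
        using False unfolding c_def by auto
      moreover have "semistrong_matching E {g\<in>E - {e}. c' g = i}"
        by (rule semistrong_matching_supergraph[OF color_class Diff_subset])
          (use pendant e(1) in auto)
      ultimately show ?thesis by (simp only:)
    qed
  qed
  moreover have "c g < 3" if "g \<in> E" for g
    using that c' \<gamma> unfolding c_def semistrong_coloring_def by auto
  ultimately show ?thesis unfolding semistrong_coloring_def by blast
qed

lemma other_neighbour:
  assumes uv: "{u, v} \<in> E" and "degree E v \<noteq> 1"
  shows "\<exists>w. {v, w} \<in> E \<and> w \<noteq> u"
proof -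
  have "{u, v} \<in> {g\<in>E. v \<in> g}" using uv by simp
  then have "degree E v \<noteq> 0" unfolding degree_def using finite_edges by auto
  then have "card {g\<in>E. v \<in> g} = 2"
    using assms(2) degree_le_2[of v] unfolding degree_def by linarith
  then obtain g1 g2 where "{g\<in>E. v \<in> g} = {g1, g2}" "g1 \<noteq> g2" by (meson card_2_iff)
  then obtain g where g: "g \<in> E" "v \<in> g" "g \<noteq> {u, v}" by blast
  obtain w where "g = {v, w}" using card_2_edge_other[OF card_edge[OF g(1)] g(2)] by blast
  then show ?thesis using g by (auto simp: insert_commute)
qed

lemma nonbacktracking_walk_exists:
  assumes no_leaf: "\<And>e u. e \<in> E \<Longrightarrow> u \<in> e \<Longrightarrow> degree E u \<noteq> 1" and ab: "{a, b} \<in> E"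
  obtains x where "\<And>k. {x k, x (Suc k)} \<in> E" "\<And>k. x (Suc (Suc k)) \<noteq> x k"
proof -
  have other: "\<exists>w. {v, w} \<in> E \<and> w \<noteq> u" if "{u, v} \<in> E" for u v
    using other_neighbour[OF that no_leaf[OF that]] by simp
  define next_vertex where "next_vertex u v = (SOME w. {v, w} \<in> E \<and> w \<noteq> u)" for u v
  have next_vertex: "{v, next_vertex u v} \<in> E \<and> next_vertex u v \<noteq> u" if "{u, v} \<in> E" for u v
    unfolding next_vertex_def using other[OF that] by (rule someI_ex)
  define state where "state k = ((\<lambda>(u, v). (v, next_vertex u v)) ^^ k) (a, b)" for k
  have state_Suc: "state (Suc k) = (snd (state k), next_vertex (fst (state k)) (snd (state k)))" for k
    unfolding state_def by (simp add: case_prod_beta)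
  have state_edge: "{fst (state k), snd (state k)} \<in> E" for k
  proof (induction k)
    case 0
    then show ?case using ab by (simp add: state_def)
  next
    case (Suc k)
    then show ?case using next_vertex by (simp add: state_Suc)
  qed
  define x where "x k = fst (state k)" for k
  have x_Suc: "x (Suc k) = snd (state k)" for k by (simp add: x_def state_Suc)
  show ?thesis
  proof (rule that)
    show "{x k, x (Suc k)} \<in> E" for k using state_edge[of k] by (simp add: x_def state_Suc)
    show "x (Suc (Suc k)) \<noteq> x k" for k
      using next_vertex[OF state_edge[of k]] by (simp add: x_Suc state_Suc x_def)
  qed
qed

lemma finite_vertices: "finite (\<Union>E)"
  using finite_edges card_edge by (metis card_eq_0_iff finite_Union zero_neq_numeral)

lemma nonbacktracking_walk_first_repetition:
  assumes walk: "\<And>k. {x k, x (Suc k)} \<in> E" and nonbacktracking: "\<And>k. x (Suc (Suc k)) \<noteq> x k"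
    and inj: "inj_on x {..<m}" and j: "j < m" "x j = x m"
  shows "j = 0"
proof (rule ccontr)
  assume "j \<noteq> 0"
  then obtain j' where j': "j = Suc j'" by (cases j) auto
  obtain m' where m': "m = Suc m'" using j(1) by (cases m) auto
  have "{x j, x j'} \<in> E" using walk[of j'] by (simp add: j' insert_commute)
  moreover have "{x j, x (Suc j)} \<in> E" by (rule walk)
  moreover have "{x j, x m'} \<in> E" using walk[of m'] j(2) by (simp add: m' insert_commute)
  moreover have "x j' \<noteq> x (Suc j)" using nonbacktracking[of j'] by (simp add: j')
  ultimately have "x m' = x j' \<or> x m' = x (Suc j)" by (rule neighbour_cases)
  moreover have "x m' \<noteq> x j'" using inj_on_contraD[OF inj, of m' j'] j j' m' by simp
  moreover have "x m' \<noteq> x (Suc j)"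
  proof (cases "Suc j < m'")
    case True
    then show ?thesis using inj_on_contraD[OF inj, of m' "Suc j"] m' by simp
  next
    case False
    then have "Suc j = m' \<or> j = m'" using j(1) m' by linarith
    then show ?thesis using nonbacktracking[of j] edge_ends_neq[OF walk[of m']] j(2) m' by auto
  qed
  ultimately show False by blast
qed

lemma cycle_of_nonbacktracking_walk:
  assumes walk: "\<And>k. {x k, x (Suc k)} \<in> E" and nonbacktracking: "\<And>k. x (Suc (Suc k)) \<noteq> x k"
  obtains n where "3 \<le> n" "inj_on x {..<n}" "cycle_edges x n \<subseteq> E"
proof -
  have "range x \<subseteq> \<Union>E" using walk by blast
  then obtain m j where inj: "inj_on x {..<m}" and j: "j < m" "x j = x m"
    using first_repetition finite_subset[OF _ finite_vertices] by metis
  then have "j = 0" by (intro nonbacktracking_walk_first_repetition[of x m j] walk nonbacktracking)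
  with j have closing: "x m = x 0" by simp
  have "3 \<le> m"
  proof (rule ccontr)
    assume "\<not> 3 \<le> m"
    then have "m = 1 \<or> m = 2" using j(1) by linarith
    then show False
      using closing edge_ends_neq[OF walk[of 0]] nonbacktracking[of 0] by (auto simp: numeral_2_eq_2)
  qed
  moreover have "cycle_edge x m i \<in> E" if "i < m" for i
  proof (cases "Suc i < m")
    case True
    then show ?thesis using walk[of i] that by (simp add: cycle_edge_def cyc_next_eq)
  next
    case False
    then have "Suc i = m" using that by simp
    then show ?thesis using walk[of i] that closing by (simp add: cycle_edge_def cyc_next_eq)
  qed
  ultimately show ?thesis using that inj by (auto simp: cycle_edges_def)
qed

end

lemma max_degree_2_graph_of_simple_graph:
  assumes "simple_graph V E" "max_degree V E \<le> 2"
  shows "max_degree_2_graph E"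
proof
  have finV: "finite V" and edges: "\<And>e. e \<in> E \<Longrightarrow> e \<subseteq> V \<and> card e = 2"
    using assms(1) unfolding simple_graph_def by auto
  then show "finite E" by (meson PowI finite_Pow_iff finite_subset subsetI)
  show "card e = 2" if "e \<in> E" for e using edges that by blast
  show "degree E v \<le> 2" for v
  proof (cases "v \<in> V")
    case True
    then have "degree E v \<le> max_degree V E" unfolding max_degree_def using finV by simp
    then show ?thesis using assms(2) by simp
  next
    case False
    then have "{e\<in>E. v \<in> e} = {}" using edges by blast
    then have "degree E v = 0" unfolding degree_def by (metis card.empty)
    then show ?thesis by simp
  qed
qed

lemma semistrong_3_coloring_exists:
  assumes "max_degree_2_graph E"
    and "\<And>S. \<not> cycle_component E S 4" "\<And>S. \<not> cycle_component E S 7"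
  shows "\<exists>c. semistrong_coloring E 3 c"
  using assms
proof (induction "card E" arbitrary: E rule: less_induct)
  case less
  then interpret max_degree_2_graph E by simp
  have smaller: "\<exists>c. semistrong_coloring E' 3 c" if "E' \<subset> E" for E'
  proof -
    have "max_degree_2_graph E'" using that subgraph by blast
    moreover have "card E' < card E" using psubset_card_mono[OF finite_edges that] .
    moreover have "\<not> cycle_component E' S 4" "\<not> cycle_component E' S 7" for S
      using less.prems(2,3) cycle_component_subgraph that by blast+
    ultimately show ?thesis using less.hyps by blast
  qed
  consider (empty) "E = {}"
    | (leaf) e u where "e \<in> E" "u \<in> e" "degree E u = 1"
    | (no_leaf) a b where "{a, b} \<in> E" "\<And>e u. e \<in> E \<Longrightarrow> u \<in> e \<Longrightarrow> degree E u \<noteq> 1"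
  proof (cases "E = {}")
    case False
    then obtain e where "e \<in> E" by blast
    then obtain a b where "e = {a, b}" using card_edge by (meson card_2_iff)
    then show ?thesis using that \<open>e \<in> E\<close> by blast
  qed
  then show ?case
  proof cases
    case empty
    then have "semistrong_coloring E 3 (\<lambda>_. 0)"
      by (simp add: semistrong_coloring_def semistrong_matching_def)
    then show ?thesis by blast
  next
    case leaf
    obtain v where uv: "e = {u, v}" using card_2_edge_other[OF card_edge[OF leaf(1)] leaf(2)] by blast
    obtain c' where "semistrong_coloring (E - {e}) 3 c'" using smaller leaf(1) by blast
    then show ?thesis by (rule semistrong_coloring_extend_pendant[OF uv leaf(1,3)])
  next
    case no_leaf
    obtain x where "\<And>k. {x k, x (Suc k)} \<in> E" "\<And>k. x (Suc (Suc k)) \<noteq> x k"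
      using nonbacktracking_walk_exists[OF _ no_leaf(1)] no_leaf(2) by blast
    then obtain n where n: "3 \<le> n" and inj: "inj_on x {..<n}" and cycle: "cycle_edges x n \<subseteq> E"
      by (rule cycle_of_nonbacktracking_walk)
    have "cycle_component E (x ` {..<n}) n" using cycle_component_of_cycle[OF inj n cycle] .
    then have "n \<noteq> 4" "n \<noteq> 7" using less.prems(2,3) by blast+
    moreover have "cycle_edge x n 0 \<in> cycle_edges x n" using n by (simp add: cycle_edges_def)
    then obtain c' where "semistrong_coloring (E - cycle_edges x n) 3 c'"
      using smaller cycle by blast
    ultimately show ?thesis by (intro semistrong_coloring_extend_cycle[OF inj n _ _ cycle])
  qed
qed

theorem theorem1:
  fixes V :: "'a set" and E :: "'a set set"
  assumes "simple_graph V E"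
    and "max_degree V E = 2"
    and "\<forall>S. component V E S \<longrightarrow> \<not> induced_iso_cycle E S 4 \<and> \<not> induced_iso_cycle E S 7"
  shows "semistrong_chromatic_index E \<le> 3"
proof -
  have graph: "max_degree_2_graph E"
    by (rule max_degree_2_graph_of_simple_graph[OF assms(1)]) (simp add: assms(2))
  have edges: "\<forall>e\<in>E. e \<subseteq> V" using assms(1) unfolding simple_graph_def by blast
  have "\<not> cycle_component E S 4" "\<not> cycle_component E S 7" for S
    using assms(3) cycle_component_is_component[OF edges] unfolding cycle_component_def by blast+
  then obtain c where "semistrong_coloring E 3 c" using semistrong_3_coloring_exists[OF graph] by blast
  then show ?thesis unfolding semistrong_chromatic_index_def by (intro Least_le) auto
qed

end
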